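(* Let $\mathcal{H}=(V,\mathcal{A})$ be a multi-head HyTN in which every node of $V$ is the tail of at least one hyperarc, and let $G_{\mathcal{H}}$ be its associated mean payoff game. If every node of $G_{\mathcal{H}}$ is a winning start position for Player 1, then $\mathcal{H}$ is consistent.
   Context: A multi-head HyTN is a pair $\mathcal{H}=(V,\mathcal{A})$, $V$ a finite node set, $\mathcal{A}$ a finite set of hyperarcs $A=(t_A,H_A,w_A)$ with tail $t_A\in V$, nonempty head set $H_A\subseteq V\setminus\{t_A\}$ and weights $w_A(v)\in\mathbb{R}$ for $v\in H_A$. A scheduling $s:V\to\mathbb{R}$ is feasible if $s(t_A)\ge\min_{v\in H_A}\{s(v)-w_A(v)\}$ for all $A\in\mathcal{A}$; $\mathcal{H}$ is consistent if a feasible scheduling exists. A mean payoff game (MPG) is a finite directed graph with real arc weights whose node set is partitioned into $V_0$ (nodes of Player 0) and $V_1$ (nodes of Player 1), where every node has at least one outgoing arc. A play from a start node $v_0$ proceeds in moves: when the pebble is at $v_{t-1}\in V_p$, Player $p$ chooses an arc $e_t$ leaving $v_{t-1}$ and the pebble moves to its head $v_t$. The play ends at the first $t$ such that $v_t=v_{t'}$ for some $t'<t$; Player 0 wins if $\frac{1}{t-t'}\sum_{i=t'+1}^{t}w(e_i)<0$, otherwise Player 1 wins. A strategy for Player $p$ maps each history ending in a node of $V_p$ to an outgoing arc of that node. A node $s$ is a winning start position for Player 1 if Player 1 has a strategy such that every play starting at $s$ in which Player 1 follows it is won by Player 1. The associated game $G_{\mathcal{H}}$ has $V_0=V$, $V_1=\mathcal{A}$,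 and arc set $\{(t_A,A,0)\mid A\in\mathcal{A}\}\cup\{(A,h,w_A(h))\mid A\in\mathcal{A},h\in H_A\}$ (an arc $(x,y,w)$ goes from $x$ to $y$ with weight $w$). *)

theory Defs
  imports Complex_Main
begin

text \<open>A hyperarc is a triple (tail, head set, weights); the weight function is only
  relevant on the head set.\<close>
type_synonym 'v hyperarc = "'v \<times> 'v set \<times> ('v \<Rightarrow> real)"

definition tl_of :: "'v hyperarc \<Rightarrow> 'v" where "tl_of A = fst A"
definition hd_of :: "'v hyperarc \<Rightarrow> 'v set" where "hd_of A = fst (snd A)"
definition w_of :: "'v hyperarc \<Rightarrow> 'v \<Rightarrow> real" where "w_of A = snd (snd A)"

definition hytn :: "'v set \<Rightarrow> 'v hyperarc set \<Rightarrow> bool" where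
  "hytn V \<A> \<longleftrightarrow> finite V \<and> finite \<A> \<and>
     (\<forall>A\<in>\<A>. tl_of A \<in> V \<and> hd_of A \<noteq> {} \<and> hd_of A \<subseteq> V - {tl_of A})"

definition feasible_scheduling :: "'v set \<Rightarrow> 'v hyperarc set \<Rightarrow> ('v \<Rightarrow> real) \<Rightarrow> bool" where
  "feasible_scheduling V \<A> s \<longleftrightarrow>
     (\<forall>A\<in>\<A>. s (tl_of A) \<ge> Min ((\<lambda>v. s v - w_of A v) ` hd_of A))"

definition consistent :: "'v set \<Rightarrow> 'v hyperarc set \<Rightarrow> bool" where
  "consistent V \<A> \<longleftrightarrow> (\<exists>s. feasible_scheduling V \<A> s)"

text \<open>A game is given by a node set N, the set V0 \<subseteq> N of Player 0 nodes
  (Player 1 owns N - V0) and a set E of weighted arcs (x, y, w).\<close>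
type_synonym 'n arc = "'n \<times> 'n \<times> real"

definition src :: "'n arc \<Rightarrow> 'n" where "src e = fst e"
definition tgt :: "'n arc \<Rightarrow> 'n" where "tgt e = fst (snd e)"
definition wt :: "'n arc \<Rightarrow> real" where "wt e = snd (snd e)"

definition mpg :: "'n set \<Rightarrow> 'n set \<Rightarrow> 'n arc set \<Rightarrow> bool" where
  "mpg N V0 E \<longleftrightarrow> finite N \<and> finite E \<and> V0 \<subseteq> N \<and>
     (\<forall>e\<in>E. src e \<in> N \<and> tgt e \<in> N) \<and> (\<forall>v\<in>N. \<exists>e\<in>E. src e = v)"

definition pos :: "'n \<Rightarrow> 'n arc list \<Rightarrow> nat \<Rightarrow> 'n" where
  "pos s es i = (if i = 0 then s else tgt (es ! (i - 1)))"

definition is_walk :: "'n arc set \<Rightarrow> 'n \<Rightarrow> 'n arc list \<Rightarrow> bool" where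
  "is_walk E s es \<longleftrightarrow> (\<forall>i < length es. es ! i \<in> E \<and> src (es ! i) = pos s es i)"

text \<open>A complete play: a walk whose last node is the first repetition.\<close>
definition is_play :: "'n arc set \<Rightarrow> 'n \<Rightarrow> 'n arc list \<Rightarrow> bool" where
  "is_play E s es \<longleftrightarrow> is_walk E s es \<and> length es \<ge> 1 \<and>
     inj_on (pos s es) {..<length es} \<and>
     pos s es (length es) \<in> pos s es ` {..<length es}"

definition player1_wins :: "'n \<Rightarrow> 'n arc list \<Rightarrow> bool" where
  "player1_wins s es \<longleftrightarrow>
     (let t = length es; t' = (THE t'. t' < t \<and> pos s es t' = pos s es t)
      in (\<Sum>i\<in>{t'..<t}. wt (es ! i)) / real (t - t') \<ge> 0)"

definition strategy1 :: "'n set \<Rightarrow> 'n set \<Rightarrow> 'n arc set \<Rightarrow> 'n \<Rightarrow> ('n arc list \<Rightarrow> 'n arc) \<Rightarrow> bool" where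
  "strategy1 N V0 E s \<sigma> \<longleftrightarrow>
     (\<forall>h. is_walk E s h \<and> pos s h (length h) \<in> N - V0 \<longrightarrow>
          \<sigma> h \<in> E \<and> src (\<sigma> h) = pos s h (length h))"

definition follows1 :: "'n set \<Rightarrow> 'n set \<Rightarrow> 'n \<Rightarrow> ('n arc list \<Rightarrow> 'n arc) \<Rightarrow> 'n arc list \<Rightarrow> bool" where
  "follows1 N V0 s \<sigma> es \<longleftrightarrow>
     (\<forall>i < length es. pos s es i \<in> N - V0 \<longrightarrow> es ! i = \<sigma> (take i es))"

definition winning_start1 :: "'n set \<Rightarrow> 'n set \<Rightarrow> 'n arc set \<Rightarrow> 'n \<Rightarrow> bool" where
  "winning_start1 N V0 E s \<longleftrightarrow>
     (\<exists>\<sigma>. strategy1 N V0 E s \<sigma> \<and>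
        (\<forall>es. is_play E s es \<and> follows1 N V0 s \<sigma> es \<longrightarrow> player1_wins s es))"

definition game_nodes :: "'v set \<Rightarrow> 'v hyperarc set \<Rightarrow> ('v + 'v hyperarc) set" where
  "game_nodes V \<A> = Inl ` V \<union> Inr ` \<A>"

definition game_V0 :: "'v set \<Rightarrow> ('v + 'v hyperarc) set" where
  "game_V0 V = Inl ` V"

definition game_arcs :: "'v hyperarc set \<Rightarrow> ('v + 'v hyperarc) arc set" where
  "game_arcs \<A> = {(Inl (tl_of A), Inr A, 0) | A. A \<in> \<A>} \<union>
                  {(Inr A, Inl h, w_of A h) | A h. A \<in> \<A> \<and> h \<in> hd_of A}"

end

theory Submission
  imports Defs
begin

text \<open>Run value iteration from the zero scheduling:
  \<open>s\<^sub>k\<^sub>+\<^sub>1(v) = max (s\<^sub>k(v), max\<^sub>A min\<^sub>h\<in>H\<^sub>A (s\<^sub>k(h) - w\<^sub>A(h)))\<close>, the outer maximum over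
  the hyperarcs with tail \<open>v\<close>. The iterates increase pointwise, and if they stay bounded
  their supremum is a feasible scheduling. Boundedness at \<open>v\<close> comes from a winning
  strategy \<open>\<sigma>\<close> of Player 1 from \<open>v\<close>: keep the history of a play following \<open>\<sigma>\<close> as a stack
  from which each closed cycle is popped. A popped cycle ends a play consistent with \<open>\<sigma>\<close>,
  so it has nonnegative weight, and the weight of the stack never exceeds the weight
  played. Letting Player 0 choose the hyperarc realising the maximum and \<open>\<sigma>\<close> answer with
  a head, induction on \<open>k\<close> gives \<open>s\<^sub>k(u) \<le> |N| \<cdot> max |w| + W(stack)\<close> whenever the stack ends
  in \<open>u\<close>; the stack is a simple path, so its weight is at least \<open>-|N| \<cdot> max |w|\<close>.\<close>

section \<open>Histories in a game\<close>

lemma pos_snoc: "i \<le> length p \<Longrightarrow> pos s (p @ [e]) i = pos s p i"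
  unfolding pos_def by (auto simp: nth_append)

lemma pos_snoc_length: "pos s (p @ [e]) (Suc (length p)) = tgt e"
  by (simp add: pos_def)

lemma pos_take: "i \<le> j \<Longrightarrow> j \<le> length p \<Longrightarrow> pos s (take j p) i = pos s p i"
  unfolding pos_def by auto

lemma is_walk_snoc:
  assumes "is_walk E s p" "e \<in> E" "src e = pos s p (length p)"
  shows "is_walk E s (p @ [e])"
  unfolding is_walk_def
proof (intro allI impI)
  fix i assume "i < length (p @ [e])"
  then consider "i < length p" | "i = length p" by fastforce
  then show "(p @ [e]) ! i \<in> E \<and> src ((p @ [e]) ! i) = pos s (p @ [e]) i"
    by cases (use assms pos_snoc[of i p s e] in \<open>auto simp: is_walk_def nth_append\<close>)
qed

lemma is_walk_take: "is_walk E s p \<Longrightarrow> j \<le> length p \<Longrightarrow> is_walk E s (take j p)"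
  unfolding is_walk_def by (auto simp: pos_take)

lemma follows1_snoc:
  assumes "follows1 N V0 s \<sigma> p" "pos s p (length p) \<in> N - V0 \<longrightarrow> e = \<sigma> p"
  shows "follows1 N V0 s \<sigma> (p @ [e])"
  unfolding follows1_def
proof (intro allI impI)
  fix i assume "i < length (p @ [e])" and owner: "pos s (p @ [e]) i \<in> N - V0"
  then consider "i < length p" | "i = length p" by fastforce
  then show "(p @ [e]) ! i = \<sigma> (take i (p @ [e]))"
    by cases (use assms owner pos_snoc[of i p s e] in \<open>auto simp: follows1_def nth_append\<close>)
qed

lemma follows1_take: "follows1 N V0 s \<sigma> p \<Longrightarrow> j \<le> length p \<Longrightarrow> follows1 N V0 s \<sigma> (take j p)"
  unfolding follows1_def by (auto simp: pos_take min_def)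

lemma player1_wins_cycle_weight_nonneg:
  assumes play: "is_play E s q" and wins: "player1_wins s q"
    and j: "j < length q" "pos s q j = pos s q (length q)"
  shows "0 \<le> (\<Sum>i\<in>{j..<length q}. wt (q ! i))"
proof -
  have inj: "inj_on (pos s q) {..<length q}" using play by (simp add: is_play_def)
  have "(THE t'. t' < length q \<and> pos s q t' = pos s q (length q)) = j"
  proof (rule the_equality)
    fix t' assume "t' < length q \<and> pos s q t' = pos s q (length q)"
    then show "t' = j" using j by (metis inj inj_onD lessThan_iff)
  qed (use j in simp)
  then have "0 \<le> (\<Sum>i\<in>{j..<length q}. wt (q ! i)) / real (length q - j)"
    using wins by (simp add: player1_wins_def Let_def)
  then show ?thesis using j(1) by (simp add: zero_le_divide_iff)
qed

definition walk_weight :: "'n arc list \<Rightarrow> real" where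
  "walk_weight p = (\<Sum>i<length p. wt (p ! i))"

lemma walk_weight_snoc: "walk_weight (p @ [e]) = walk_weight p + wt e"
  by (simp add: walk_weight_def nth_append)

lemma walk_weight_take_add:
  assumes "j \<le> length q"
  shows "walk_weight q = walk_weight (take j q) + (\<Sum>i\<in>{j..<length q}. wt (q ! i))"
proof -
  have "(\<Sum>i<j. wt (q ! i)) = walk_weight (take j q)"
    unfolding walk_weight_def using assms by (simp add: min_def)
  then show ?thesis
    unfolding walk_weight_def using assms
    by (simp add: lessThan_atLeast0 sum.atLeastLessThan_concat)
qed

lemma walk_weight_lower_bound:
  assumes "finite N" "is_walk E s p" "inj_on (pos s p) {..length p}" "pos s p ` {..length p} \<subseteq> N"
    and "\<And>e. e \<in> E \<Longrightarrow> \<bar>wt e\<bar> \<le> M" "0 \<le> M"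
  shows "- (real (card N) * M) \<le> walk_weight p"
proof -
  have "Suc (length p) \<le> card N"
    using card_inj_on_le[OF assms(3,4,1)] by simp
  then have "- (real (card N) * M) \<le> (\<Sum>i<length p. - M)"
    using \<open>0 \<le> M\<close> by (simp add: mult_right_mono)
  also have "\<dots> \<le> walk_weight p"
    unfolding walk_weight_def
  proof (rule sum_mono)
    fix i assume "i \<in> {..<length p}"
    then have "\<bar>wt (p ! i)\<bar> \<le> M" using assms(2,5) by (simp add: is_walk_def)
    then show "- M \<le> wt (p ! i)" by (simp add: abs_le_iff)
  qed
  finally show ?thesis .
qed

text \<open>The stack of the proof idea: a walk following \<open>\<sigma>\<close> without repeated nodes.\<close>

definition simple_history :: "'n set \<Rightarrow> 'n set \<Rightarrow> 'n arc set \<Rightarrow> 'n \<Rightarrow> ('n arc list \<Rightarrow> 'n arc) \<Rightarrow> 'n arc list \<Rightarrow> bool" where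
  "simple_history N V0 E s \<sigma> p \<longleftrightarrow>
     is_walk E s p \<and> follows1 N V0 s \<sigma> p \<and> inj_on (pos s p) {..length p}"

lemma simple_history_take:
  assumes "simple_history N V0 E s \<sigma> p" "j \<le> length p"
  shows "simple_history N V0 E s \<sigma> (take j p)"
proof -
  have "inj_on (pos s p) {..j}"
    using assms by (auto simp: simple_history_def intro: inj_on_subset)
  then have "inj_on (pos s (take j p)) {..j}"
    using assms(2) by (simp add: inj_on_def pos_take)
  then show ?thesis
    using assms is_walk_take follows1_take by (auto simp: simple_history_def min_def)
qed

lemma simple_history_snoc:
  assumes hist: "simple_history N V0 E s \<sigma> p" and e: "e \<in> E" "src e = pos s p (length p)"
    and follow: "pos s p (length p) \<in> N - V0 \<longrightarrow> e = \<sigma> p"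
    and fresh: "tgt e \<notin> pos s p ` {..length p}"
  shows "simple_history N V0 E s \<sigma> (p @ [e])"
proof -
  have "inj_on (pos s (p @ [e])) {..length p}"
    using hist by (simp add: simple_history_def inj_on_def pos_snoc)
  moreover have "{..length (p @ [e])} = insert (Suc (length p)) {..length p}" by auto
  ultimately have "inj_on (pos s (p @ [e])) {..length (p @ [e])}"
    using fresh by (simp add: pos_snoc pos_snoc_length)
  then show ?thesis
    using hist is_walk_snoc[OF _ e] follows1_snoc[of N V0 s \<sigma> p e] follow
    by (simp add: simple_history_def)
qed

text \<open>Closing a cycle ends a play consistent with \<open>\<sigma>\<close>, so the cycle is popped at no gain in weight.\<close>

lemma simple_history_close_cycle:
  assumes hist: "simple_history N V0 E s \<sigma> p" and e: "e \<in> E" "src e = pos s p (length p)"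
    and follow: "pos s p (length p) \<in> N - V0 \<longrightarrow> e = \<sigma> p"
    and win: "\<forall>es. is_play E s es \<and> follows1 N V0 s \<sigma> es \<longrightarrow> player1_wins s es"
    and j: "j \<le> length p" "pos s p j = tgt e"
  shows "walk_weight (take j p) \<le> walk_weight p + wt e"
proof -
  define q where "q = p @ [e]"
  have pos_q: "\<And>i. i \<le> length p \<Longrightarrow> pos s q i = pos s p i" and last_q: "pos s q (length q) = tgt e"
    by (simp_all add: q_def pos_snoc pos_snoc_length)
  have "{..<length q} = {..length p}" by (auto simp: q_def)
  then have "inj_on (pos s q) {..<length q}"
    using hist by (simp add: simple_history_def inj_on_def pos_q)
  moreover have "is_walk E s q" "follows1 N V0 s \<sigma> q"
    using hist is_walk_snoc[OF _ e] follows1_snoc[of N V0 s \<sigma> p e] follow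
    by (simp_all add: simple_history_def q_def)
  ultimately have "is_play E s q" "follows1 N V0 s \<sigma> q"
    using last_q j pos_q unfolding is_play_def by (auto simp: q_def intro!: image_eqI[of _ _ j])
  then have "0 \<le> (\<Sum>i\<in>{j..<length q}. wt (q ! i))"
    using win j pos_q last_q by (intro player1_wins_cycle_weight_nonneg) (auto simp: q_def)
  then show ?thesis
    using walk_weight_take_add[of j q] j(1) by (simp add: q_def walk_weight_snoc)
qed

lemma simple_history_extend:
  assumes hist: "simple_history N V0 E s \<sigma> p"
    and arc: "(u, u', c) \<in> E" "u = pos s p (length p)"
    and follow: "u \<in> N - V0 \<longrightarrow> (u, u', c) = \<sigma> p"
    and win: "\<forall>es. is_play E s es \<and> follows1 N V0 s \<sigma> es \<longrightarrow> player1_wins s es"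
  obtains p' where "simple_history N V0 E s \<sigma> p'" "pos s p' (length p') = u'"
    "walk_weight p' \<le> walk_weight p + c"
proof (cases "u' \<in> pos s p ` {..length p}")
  case False
  then have "simple_history N V0 E s \<sigma> (p @ [(u, u', c)])"
    using arc follow by (intro simple_history_snoc[OF hist]) (auto simp: src_def tgt_def)
  moreover have "pos s (p @ [(u, u', c)]) (length (p @ [(u, u', c)])) = u'"
    using pos_snoc_length[of s p "(u, u', c)"] by (simp add: tgt_def)
  moreover have "walk_weight (p @ [(u, u', c)]) = walk_weight p + c"
    by (simp add: walk_weight_snoc wt_def)
  ultimately show ?thesis using that by simp
next
  case True
  then obtain j where j: "j \<le> length p" "pos s p j = u'" by auto
  then have "walk_weight (take j p) \<le> walk_weight p + c"
    using simple_history_close_cycle[OF hist _ _ _ win, of "(u, u', c)" j] arc follow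
    by (simp add: src_def tgt_def wt_def)
  moreover have "pos s (take j p) (length (take j p)) = u'"
    using j by (simp add: pos_take min_def)
  ultimately show ?thesis using that simple_history_take[OF hist j(1)] by blast
qed

section \<open>Value iteration on a HyTN\<close>

definition value_step :: "'v hyperarc set \<Rightarrow> ('v \<Rightarrow> real) \<Rightarrow> 'v \<Rightarrow> real" where
  "value_step \<A> s v =
     Max (insert (s v) ((\<lambda>A. Min ((\<lambda>h. s h - w_of A h) ` hd_of A)) ` {A\<in>\<A>. tl_of A = v}))"

definition value_iter :: "'v hyperarc set \<Rightarrow> nat \<Rightarrow> 'v \<Rightarrow> real" where
  "value_iter \<A> k = (value_step \<A> ^^ k) (\<lambda>_. 0)"

lemma value_iter_0 [simp]: "value_iter \<A> 0 v = 0"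
  by (simp add: value_iter_def)

lemma value_iter_Suc: "value_iter \<A> (Suc k) = value_step \<A> (value_iter \<A> k)"
  by (simp add: value_iter_def)

lemma value_step_ge: "finite \<A> \<Longrightarrow> s v \<le> value_step \<A> s v"
  unfolding value_step_def by (intro Max_ge) auto

lemma value_step_ge_hyperarc:
  "finite \<A> \<Longrightarrow> A \<in> \<A> \<Longrightarrow> Min ((\<lambda>h. s h - w_of A h) ` hd_of A) \<le> value_step \<A> s (tl_of A)"
  unfolding value_step_def by (intro Max_ge) auto

lemma value_step_le:
  assumes "finite \<A>" "s v \<le> c"
    and "\<And>A. A \<in> \<A> \<Longrightarrow> tl_of A = v \<Longrightarrow> Min ((\<lambda>h. s h - w_of A h) ` hd_of A) \<le> c"
  shows "value_step \<A> s v \<le> c"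
  unfolding value_step_def using assms by (subst Max_le_iff) auto

lemma value_iter_mono:
  assumes "finite \<A>" "k \<le> k'"
  shows "value_iter \<A> k v \<le> value_iter \<A> k' v"
  using assms(2)
proof (induction k' rule: dec_induct)
  case (step n)
  then show ?case using value_step_ge[OF assms(1), of "value_iter \<A> n" v] by (simp add: value_iter_Suc)
qed simp

lemma ex_index_above_all_incseq:
  fixes f :: "'a \<Rightarrow> nat \<Rightarrow> 'b::linorder"
  assumes "finite H" "\<And>h. h \<in> H \<Longrightarrow> incseq (f h)" "\<And>h. h \<in> H \<Longrightarrow> \<exists>k. c < f h k"
  shows "\<exists>K. \<forall>h\<in>H. c < f h K"
proof -
  have "\<forall>\<^sub>F k in sequentially. c < f h k" if h: "h \<in> H" for h
  proof -
    obtain k where "c < f h k" using assms(3) h by blast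
    then show ?thesis
      using assms(2)[OF h] by (auto intro: eventually_sequentiallyI[of k] order_less_le_trans incseqD)
  qed
  then have "\<forall>\<^sub>F k in sequentially. \<forall>h\<in>H. c < f h k"
    using assms(1) by (simp add: eventually_ball_finite)
  then show ?thesis by (auto simp: eventually_sequentially)
qed

lemma consistent_if_value_iter_bounded:
  assumes hytn: "hytn V \<A>" and bounded: "\<And>v. v \<in> V \<Longrightarrow> bdd_above (range (\<lambda>k. value_iter \<A> k v))"
  shows "consistent V \<A>"
proof -
  define s where "s v = (SUP k. value_iter \<A> k v)" for v
  have fin: "finite \<A>" using hytn by (simp add: hytn_def)
  have "s (tl_of A) \<ge> Min ((\<lambda>v. s v - w_of A v) ` hd_of A)" if A: "A \<in> \<A>" for A
  proof -
    let ?t = "tl_of A" and ?H = "hd_of A"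
    have "?t \<in> V" "?H \<subseteq> V" "?H \<noteq> {}" and fin_H: "finite ?H"
      using A hytn by (auto simp: hytn_def intro: finite_subset)
    have "\<exists>h\<in>?H. \<forall>k. value_iter \<A> k h - w_of A h \<le> s ?t"
    proof (rule ccontr)
      assume "\<not> ?thesis"
      then have "\<And>h. h \<in> ?H \<Longrightarrow> \<exists>k. s ?t < value_iter \<A> k h - w_of A h"
        by (auto simp: not_le)
      moreover have "incseq (\<lambda>k. value_iter \<A> k h - w_of A h)" for h
        using value_iter_mono[OF fin] by (simp add: incseq_def)
      ultimately obtain K where K: "\<forall>h\<in>?H. s ?t < value_iter \<A> K h - w_of A h"
        using ex_index_above_all_incseq[OF fin_H, of "\<lambda>h k. value_iter \<A> k h - w_of A h"] by blast
      have "Min ((\<lambda>h. value_iter \<A> K h - w_of A h) ` ?H) \<le> value_iter \<A> (Suc K) ?t"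
        using value_step_ge_hyperarc[OF fin A] by (simp add: value_iter_Suc)
      also have "\<dots> \<le> s ?t"
        unfolding s_def using bounded[OF \<open>?t \<in> V\<close>] by (intro cSUP_upper) auto
      finally obtain h where "h \<in> ?H" "value_iter \<A> K h - w_of A h \<le> s ?t"
        using fin_H \<open>?H \<noteq> {}\<close> by (auto simp: Min_le_iff)
      with K show False by fastforce
    qed
    then obtain h where h: "h \<in> ?H" "\<forall>k. value_iter \<A> k h - w_of A h \<le> s ?t" by blast
    have "Min ((\<lambda>v. s v - w_of A v) ` ?H) \<le> s h - w_of A h"
      using fin_H h(1) by (intro Min_le) auto
    also have "s h \<le> s ?t + w_of A h"
      unfolding s_def[of h] using h(2) by (intro cSUP_least) (auto simp: algebra_simps)
    finally show ?thesis by simp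
  qed
  then show ?thesis unfolding consistent_def feasible_scheduling_def by blast
qed

section \<open>The associated game\<close>

lemma finite_game_nodes: "hytn V \<A> \<Longrightarrow> finite (game_nodes V \<A>)"
  by (simp add: hytn_def game_nodes_def)

lemma finite_game_arcs:
  assumes "hytn V \<A>"
  shows "finite (game_arcs \<A>)"
proof -
  have "game_arcs \<A> \<subseteq> (\<lambda>A. (Inl (tl_of A), Inr A, 0)) ` \<A> \<union>
      (\<lambda>(A, h). (Inr A, Inl h, w_of A h)) ` (\<A> \<times> V)"
    using assms by (force simp: game_arcs_def hytn_def)
  moreover have "finite \<A>" "finite V" using assms by (simp_all add: hytn_def)
  ultimately show ?thesis by (auto intro: finite_subset)
qed

lemma tgt_game_arc: "hytn V \<A> \<Longrightarrow> e \<in> game_arcs \<A> \<Longrightarrow> tgt e \<in> game_nodes V \<A>"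
  by (force simp: game_arcs_def game_nodes_def hytn_def tgt_def)

lemma game_arc_from_hyperarc:
  "e \<in> game_arcs \<A> \<Longrightarrow> src e = Inr A \<Longrightarrow> \<exists>h\<in>hd_of A. e = (Inr A, Inl h, w_of A h)"
  unfolding game_arcs_def src_def by auto

definition max_abs_weight :: "'n arc set \<Rightarrow> real" where
  "max_abs_weight E = Max (insert 0 ((\<lambda>e. \<bar>wt e\<bar>) ` E))"

lemma abs_wt_le_max_abs_weight: "finite E \<Longrightarrow> e \<in> E \<Longrightarrow> \<bar>wt e\<bar> \<le> max_abs_weight E"
  unfolding max_abs_weight_def by (intro Max_ge) auto

lemma max_abs_weight_nonneg: "finite E \<Longrightarrow> 0 \<le> max_abs_weight E"
  unfolding max_abs_weight_def by (intro Max_ge) auto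

locale hytn_winning_strategy1 =
  fixes V :: "'v set" and \<A> :: "'v hyperarc set" and x and \<sigma>
  assumes hytn: "hytn V \<A>" and start: "x \<in> game_nodes V \<A>"
    and strategy: "strategy1 (game_nodes V \<A>) (game_V0 V) (game_arcs \<A>) x \<sigma>"
    and win: "\<forall>es. is_play (game_arcs \<A>) x es \<and> follows1 (game_nodes V \<A>) (game_V0 V) x \<sigma> es
                 \<longrightarrow> player1_wins x es"
begin

abbreviation "history p \<equiv> simple_history (game_nodes V \<A>) (game_V0 V) (game_arcs \<A>) x \<sigma> p"

definition bound :: real where
  "bound = real (card (game_nodes V \<A>)) * max_abs_weight (game_arcs \<A>)"

lemma history_weight_lower_bound:
  assumes "history p"
  shows "- bound \<le> walk_weight p"
proof -
  have walk: "is_walk (game_arcs \<A>) x p" using assms by (simp add: simple_history_def)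
  have "pos x p i \<in> game_nodes V \<A>" if "i \<le> length p" for i
  proof (cases i)
    case (Suc j)
    then have "p ! j \<in> game_arcs \<A>" using walk that by (simp add: is_walk_def)
    then show ?thesis using Suc tgt_game_arc[OF hytn] by (simp add: pos_def)
  qed (simp add: pos_def start)
  then have "pos x p ` {..length p} \<subseteq> game_nodes V \<A>" by auto
  then show ?thesis
    unfolding bound_def using assms finite_game_nodes[OF hytn] finite_game_arcs[OF hytn]
    by (intro walk_weight_lower_bound abs_wt_le_max_abs_weight max_abs_weight_nonneg)
      (auto simp: simple_history_def)
qed

lemma value_iter_le_history_weight:
  "history p \<Longrightarrow> pos x p (length p) = Inl v \<Longrightarrow> value_iter \<A> k v \<le> bound + walk_weight p"
proof (induction k arbitrary: p v)
  case 0
  then show ?case using history_weight_lower_bound[OF "0.prems"(1)] by simp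
next
  case (Suc k)
  have fin: "finite \<A>" using hytn by (simp add: hytn_def)
  show ?case unfolding value_iter_Suc
  proof (rule value_step_le[OF fin])
    show "value_iter \<A> k v \<le> bound + walk_weight p" using Suc by blast
  next
    fix A assume A: "A \<in> \<A>" "tl_of A = v"
    have arc: "(Inl v, Inr A, 0) \<in> game_arcs \<A>" unfolding game_arcs_def using A by blast
    have "Inl v \<in> game_V0 V" using A hytn by (auto simp: game_V0_def hytn_def)
    then obtain p' where p': "history p'" "pos x p' (length p') = Inr A"
      "walk_weight p' \<le> walk_weight p + 0"
      using simple_history_extend[OF Suc.prems(1) arc Suc.prems(2)[symmetric] _ win] by blast
    have "Inr A \<in> game_nodes V \<A> - game_V0 V" using A by (auto simp: game_nodes_def game_V0_def)
    then have "\<sigma> p' \<in> game_arcs \<A>" "src (\<sigma> p') = Inr A"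
      using strategy p' by (auto simp: strategy1_def simple_history_def)
    then obtain h where h: "h \<in> hd_of A" and answer: "(Inr A, Inl h, w_of A h) = \<sigma> p'"
      using game_arc_from_hyperarc by metis
    then have "(Inr A, Inl h, w_of A h) \<in> game_arcs \<A>" using \<open>\<sigma> p' \<in> game_arcs \<A>\<close> by simp
    then obtain p'' where p'': "history p''" "pos x p'' (length p'') = Inl h"
      "walk_weight p'' \<le> walk_weight p' + w_of A h"
      using simple_history_extend[OF p'(1) _ p'(2)[symmetric] _ win] answer by blast
    have "Min ((\<lambda>h. value_iter \<A> k h - w_of A h) ` hd_of A) \<le> value_iter \<A> k h - w_of A h"
      using h A hytn by (intro Min_le) (auto simp: hytn_def intro: finite_subset)
    also have "\<dots> \<le> bound + walk_weight p"
      using Suc.IH[OF p''(1,2)] p'(3) p''(3) by linarith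
    finally show "Min ((\<lambda>h. value_iter \<A> k h - w_of A h) ` hd_of A) \<le> bound + walk_weight p" .
  qed
qed

lemma value_iter_bounded: "x = Inl v \<Longrightarrow> value_iter \<A> k v \<le> bound"
  using value_iter_le_history_weight[of "[]" v k]
  by (simp add: simple_history_def is_walk_def follows1_def walk_weight_def pos_def)

end

theorem mainTheorem9:
  fixes V :: "'v set" and \<A> :: "'v hyperarc set"
  assumes "hytn V \<A>"
    and "\<forall>v\<in>V. \<exists>A\<in>\<A>. tl_of A = v"
    and "\<forall>x\<in>game_nodes V \<A>. winning_start1 (game_nodes V \<A>) (game_V0 V) (game_arcs \<A>) x"
  shows "consistent V \<A>"
proof (rule consistent_if_value_iter_bounded[OF assms(1)])
  \<comment> \<open>The second hypothesis only makes the game a proper mean payoff game.\<close>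
  fix v assume "v \<in> V"
  then have start: "Inl v \<in> game_nodes V \<A>" by (simp add: game_nodes_def)
  then obtain \<sigma> where \<sigma>: "hytn_winning_strategy1 V \<A> (Inl v) \<sigma>"
    using assms(1,3) by (force simp: winning_start1_def hytn_winning_strategy1_def)
  have "value_iter \<A> k v \<le> hytn_winning_strategy1.bound V \<A>" for k
    using hytn_winning_strategy1.value_iter_bounded[OF \<sigma> refl] .
  then show "bdd_above (range (\<lambda>k. value_iter \<A> k v))" by (rule bdd_aboveI2)
qed

end
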